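(* Let $\mu$ be a positive Radon measure on $\mathbb{R}_+=[0,\infty)$ having finite moments of all orders (i.e. $\int_{\mathbb{R}_+} t^n\,d\mu(t)<\infty$ for all $n\in\mathbb{N}$) and satisfying $\mu\big(\mathbb{R}_+\setminus[0,s_\mu)\big)=0$, where $s_\mu:=\sup\{x: x\in\mathrm{supp}(\mu)\}\in[0,\infty]$. Let $\mathcal{W}=\{w_n\}_{n=0}^\infty$ be a sequence in a real Hilbert space $\mathscr{K}$ and assume there is a constant $C>0$ such that \[ \Big\|\sum_{n=0}^\infty a_n w_n\Big\|_{\mathscr{K}}\le C\Big\|\sum_{n=0}^\infty a_n t^n\Big\|_{L^2(\mu)} \] for all finitely supported sequences $\{a_n\}_{n=0}^\infty$ of non-negative real numbers. Let $\mathscr{H}$ be a real Hilbert space, $\{\lambda_n\}_{n=0}^\infty$ a sequence of positive numbers, and $\mathcal{V}=\{v_n\}_{n=0}^\infty\subset\mathscr{H}$ a sequence satisfying \[ \langle \lambda_n v_n,\lambda_m v_m\rangle_{\mathscr{H}}=\int_{\mathbb{R}_+} t^{m+n}\,d\mu(t)+\langle w_n,w_m\rangle_{\mathscr{K}}\quad\text{for all } n,m\in\mathbb{N}. \] Then $\overline{\mathcal{C}}[\mathcal{V}]=\mathcal{C}[[\mathcal{V}]]$; in particular $\mathcal{C}[[\mathcal{V}]]$ is a closed convex cone in $\mathscr{H}$.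
   Context: $\mathbb{N}=\{0,1,2,\dots\}$. For a sequence $\mathcal{V}=\{v_n\}_{n=0}^\infty$ in a real Hilbert space $\mathscr{H}$: $\mathcal{C}[\mathcal{V}]=\{\sum_{n=0}^N a_n v_n : N\in\mathbb{N},\ a_n\ge 0\}$ is the convex cone generated by $\mathcal{V}$, $\overline{\mathcal{C}}[\mathcal{V}]$ is its norm closure in $\mathscr{H}$, and $\mathcal{C}[[\mathcal{V}]]=\{\sum_{n=0}^\infty a_n v_n : a_n\ge 0,\ \text{the series converges in }\mathscr{H}\}$, where convergence means convergence of the partial sums $\sum_{n=0}^N a_nv_n$ as $N\to\infty$. *)

theory Defs
  imports "HOL-Analysis.Analysis" "HOL-Probability.Probability"
begin

definition measure_support :: "real measure \<Rightarrow> real set" where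
  "measure_support M = {x. \<forall>U. open U \<and> x \<in> U \<longrightarrow> emeasure M U > 0}"

definition supp_sup :: "real measure \<Rightarrow> ereal" where
  "supp_sup M = Sup (ereal ` measure_support M)"

definition cone_gen :: "(nat \<Rightarrow> 'a::real_vector) \<Rightarrow> 'a set" where
  "cone_gen V = {(\<Sum>n\<le>N. a n *\<^sub>R V n) | N a. \<forall>n. a n \<ge> 0}"

definition series_cone :: "(nat \<Rightarrow> 'a::real_normed_vector) \<Rightarrow> 'a set" where
  "series_cone V = {x. \<exists>a. (\<forall>n. a n \<ge> 0) \<and> (\<lambda>N. \<Sum>n\<le>N. a n *\<^sub>R V n) \<longlonglongrightarrow> x}"

end

theory Submission
  imports Defs
begin

(* Put u n = lam n v n.  By the Gram identity the square norm of sum c n u n is the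
   L2(mu) norm square of the polynomial p = sum c n t^n plus the square norm of
   sum c n w n, and for c >= 0 the latter is at most C^2 times the former; so on
   non-negative combinations the norm of H is equivalent to the L2(mu) norm of p,
   and such p are non-decreasing on [0, oo).  (If s_mu <= 0, then mu = 0 and all u n
   vanish.)
   Let X_k = sum b_k n u n converge to x.  Since p_k >= b_k n t^n on [0, oo), the
   coefficients are bounded, and a subsequence converges coefficientwise to some a.
   The tails sum_{n>N} b_k n t^n are small in L2(mu) uniformly in large k: beyond a
   point t1 < s_mu every p_k is L2-close to one fixed p_K whose L2 mass there is small,
   and on [0, t1] the tail is at most (t1/t2)^(N+1) p_k(t2), where t1 < t2 < s_mu and
   p_k(t2)^2 mu(t2, oo) <= |X_k|^2 is bounded because t2 lies below the top of the
   support.  Hence the partial sums of sum a n u n converge to x. *)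

lemma series_cone_convex: "convex (series_cone V)"
  unfolding convex_def
proof (intro ballI allI impI)
  fix x y and s t :: real
  assume "x \<in> series_cone V" "y \<in> series_cone V" "0 \<le> s" "0 \<le> t" "s + t = 1"
  then obtain a b where a: "\<forall>n. a n \<ge> 0" "(\<lambda>N. \<Sum>n\<le>N. a n *\<^sub>R V n) \<longlonglongrightarrow> x"
    and b: "\<forall>n. b n \<ge> 0" "(\<lambda>N. \<Sum>n\<le>N. b n *\<^sub>R V n) \<longlonglongrightarrow> y"
    unfolding series_cone_def by blast
  have "(\<Sum>n\<le>N. (s * a n + t * b n) *\<^sub>R V n)
      = s *\<^sub>R (\<Sum>n\<le>N. a n *\<^sub>R V n) + t *\<^sub>R (\<Sum>n\<le>N. b n *\<^sub>R V n)" for N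
    by (simp add: scaleR_add_left sum.distrib scaleR_sum_right)
  then have "(\<lambda>N. \<Sum>n\<le>N. (s * a n + t * b n) *\<^sub>R V n) \<longlonglongrightarrow> s *\<^sub>R x + t *\<^sub>R y"
    using a(2) b(2) by (simp add: tendsto_add tendsto_scaleR)
  moreover have "\<forall>n. s * a n + t * b n \<ge> 0"
    using a b \<open>0 \<le> s\<close> \<open>0 \<le> t\<close> by simp
  ultimately show "s *\<^sub>R x + t *\<^sub>R y \<in> series_cone V"
    unfolding series_cone_def by (intro CollectI exI[of _ "\<lambda>n. s * a n + t * b n"]) simp
qed

lemma series_cone_cone: "cone (series_cone V)"
  unfolding cone_def
proof (intro ballI allI impI)
  fix x and c :: real
  assume "x \<in> series_cone V" "0 \<le> c"
  then obtain a where a: "\<forall>n. a n \<ge> 0" "(\<lambda>N. \<Sum>n\<le>N. a n *\<^sub>R V n) \<longlonglongrightarrow> x"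
    unfolding series_cone_def by blast
  have "(\<lambda>N. \<Sum>n\<le>N. (c * a n) *\<^sub>R V n) \<longlonglongrightarrow> c *\<^sub>R x"
    using tendsto_scaleR[OF tendsto_const a(2), of c] by (simp add: scaleR_sum_right)
  moreover have "\<forall>n. c * a n \<ge> 0"
    using a \<open>0 \<le> c\<close> by simp
  ultimately show "c *\<^sub>R x \<in> series_cone V"
    unfolding series_cone_def by (intro CollectI exI[of _ "\<lambda>n. c * a n"]) simp
qed

lemma series_cone_subset_closure_cone_gen: "series_cone V \<subseteq> closure (cone_gen V)"
proof
  fix x assume "x \<in> series_cone V"
  then obtain a where "\<forall>n. a n \<ge> 0" and lim: "(\<lambda>N. \<Sum>n\<le>N. a n *\<^sub>R V n) \<longlonglongrightarrow> x"
    unfolding series_cone_def by blast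
  then have "\<forall>N. (\<Sum>n\<le>N. a n *\<^sub>R V n) \<in> cone_gen V"
    unfolding cone_gen_def by blast
  with lim show "x \<in> closure (cone_gen V)"
    unfolding closure_sequential by (intro exI[of _ "\<lambda>N. \<Sum>n\<le>N. a n *\<^sub>R V n"]) blast
qed

lemma cone_gen_scaleR_subset:
  assumes "\<And>n. 0 \<le> lam n"
  shows "cone_gen (\<lambda>n. lam n *\<^sub>R V n) \<subseteq> cone_gen V"
proof
  fix x assume "x \<in> cone_gen (\<lambda>n. lam n *\<^sub>R V n)"
  then obtain N a where "\<forall>n. 0 \<le> a n" "x = (\<Sum>n\<le>N. (a n * lam n) *\<^sub>R V n)"
    unfolding cone_gen_def by auto
  with assms show "x \<in> cone_gen V"
    unfolding cone_gen_def by (auto intro!: exI[of _ "\<lambda>n. a n * lam n"])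
qed

lemma series_cone_scaleR_subset:
  assumes "\<And>n. 0 \<le> lam n"
  shows "series_cone (\<lambda>n. lam n *\<^sub>R V n) \<subseteq> series_cone V"
proof
  fix x assume "x \<in> series_cone (\<lambda>n. lam n *\<^sub>R V n)"
  then obtain a where "\<forall>n. 0 \<le> a n" "(\<lambda>N. \<Sum>n\<le>N. (a n * lam n) *\<^sub>R V n) \<longlonglongrightarrow> x"
    unfolding series_cone_def by auto
  with assms show "x \<in> series_cone V"
    unfolding series_cone_def by (auto intro!: exI[of _ "\<lambda>n. a n * lam n"])
qed

lemma
  assumes "\<And>n. 0 < lam n"
  shows cone_gen_scaleR_pos: "cone_gen (\<lambda>n. lam n *\<^sub>R V n) = cone_gen V"
    and series_cone_scaleR_pos: "series_cone (\<lambda>n. lam n *\<^sub>R V n) = series_cone V"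
proof -
  have V: "V = (\<lambda>n. inverse (lam n) *\<^sub>R (lam n *\<^sub>R V n))"
    using assms by (simp add: less_imp_neq[symmetric])
  have "cone_gen V \<subseteq> cone_gen (\<lambda>n. lam n *\<^sub>R V n)"
    by (subst V, rule cone_gen_scaleR_subset) (simp add: assms less_imp_le)
  then show "cone_gen (\<lambda>n. lam n *\<^sub>R V n) = cone_gen V"
    using cone_gen_scaleR_subset[of lam V] assms by (auto intro: less_imp_le)
  have "series_cone V \<subseteq> series_cone (\<lambda>n. lam n *\<^sub>R V n)"
    by (subst V, rule series_cone_scaleR_subset) (simp add: assms less_imp_le)
  then show "series_cone (\<lambda>n. lam n *\<^sub>R V n) = series_cone V"
    using series_cone_scaleR_subset[of lam V] assms by (auto intro: less_imp_le)
qed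

lemma cone_gen_seq_obtain:
  assumes "\<And>k. X k \<in> cone_gen V"
  obtains b NN where "\<And>k n. 0 \<le> b k n" "\<And>k n. NN k < n \<Longrightarrow> b k n = 0"
    "\<And>k. X k = (\<Sum>n\<le>NN k. b k n *\<^sub>R V n)"
proof -
  from assms have "\<forall>k. \<exists>N a. (\<forall>n. 0 \<le> a n) \<and> X k = (\<Sum>n\<le>N. a n *\<^sub>R V n)"
    unfolding cone_gen_def by blast
  then obtain NN a where a: "\<And>k n. 0 \<le> a k n" and X: "\<And>k. X k = (\<Sum>n\<le>NN k. a k n *\<^sub>R V n)"
    by metis
  show thesis
  proof
    show "X k = (\<Sum>n\<le>NN k. (if n \<le> NN k then a k n else 0) *\<^sub>R V n)" for k
      using X by simp
  qed (auto simp: a)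
qed

lemma bounded_seq_coordinatewise_convergent_subseq:
  fixes b :: "nat \<Rightarrow> nat \<Rightarrow> real"
  assumes "\<And>k n. 0 \<le> b k n \<and> b k n \<le> B n"
  obtains r a where "strict_mono r" "\<And>n. (\<lambda>k. b (r k) n) \<longlonglongrightarrow> a n"
proof -
  define S where "S = PiE UNIV (\<lambda>n. {0..B n})"
  have "compactin (product_topology (\<lambda>n. euclidean) UNIV) S"
    unfolding S_def compactin_PiE by auto
  then have "seq_compact S"
    by (simp add: euclidean_product_topology compact_imp_seq_compact)
  moreover have "\<forall>k. b k \<in> S"
    using assms by (auto simp: S_def)
  ultimately obtain l r where "strict_mono r" "(b \<circ> r) \<longlonglongrightarrow> l"
    unfolding seq_compact_def by metis
  moreover have "(\<lambda>k. b (r k) n) \<longlonglongrightarrow> l n" for n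
    using continuous_on_tendsto_compose[OF continuous_on_product_coordinates \<open>(b \<circ> r) \<longlonglongrightarrow> l\<close>]
    by (simp add: o_def)
  ultimately show thesis
    using that by blast
qed

lemma ereal_approx_from_below:
  fixes s :: ereal
  assumes "0 < s"
  obtains \<tau> :: "nat \<Rightarrow> real" where "\<And>j. 0 \<le> \<tau> j" "\<And>j. ereal (\<tau> j) < s"
    "\<And>t. ereal t < s \<Longrightarrow> eventually (\<lambda>j. t \<le> \<tau> j) sequentially"
proof -
  obtain f :: "nat \<Rightarrow> ereal" where f: "\<And>i. f i < s" "f \<longlonglongrightarrow> s"
    using countable_approach[of s] assms by auto
  show thesis
  proof
    show "0 \<le> max 0 (real_of_ereal (f j))" for j
      by simp
    show "ereal (max 0 (real_of_ereal (f j))) < s" for j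
      using f(1)[of j] assms by (cases "f j") (auto simp: zero_ereal_def)
    show "eventually (\<lambda>j. t \<le> max 0 (real_of_ereal (f j))) sequentially" if "ereal t < s" for t
      using order_tendstoD(1)[OF f(2) that]
    proof eventually_elim
      case (elim j)
      then show ?case
        using f(1)[of j] by (cases "f j") auto
    qed
  qed
qed

lemma nonneg_poly_tail_le:
  fixes b :: "nat \<Rightarrow> real"
  assumes "\<And>n. 0 \<le> b n" "0 \<le> t" "t \<le> t1" "t1 < t2"
  shows "(\<Sum>n\<in>{N<..L}. b n * t ^ n) \<le> (t1 / t2) ^ Suc N * (\<Sum>n\<in>{N<..L}. b n * t2 ^ n)"
proof -
  define q where "q = t1 / t2"
  have q: "0 \<le> q" "q \<le> 1" "q * t2 = t1"
    using assms by (auto simp: q_def)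
  have "b n * t ^ n \<le> q ^ Suc N * (b n * t2 ^ n)" if "N < n" for n
  proof -
    have "t ^ n \<le> (q * t2) ^ n"
      using assms q by (intro power_mono) auto
    also have "\<dots> \<le> q ^ Suc N * t2 ^ n"
      unfolding power_mult_distrib using q assms that
      by (intro mult_right_mono power_decreasing) auto
    finally show ?thesis
      using assms(1)[of n] by (simp add: mult_left_mono mult.left_commute)
  qed
  then have "(\<Sum>n\<in>{N<..L}. b n * t ^ n) \<le> (\<Sum>n\<in>{N<..L}. q ^ Suc N * (b n * t2 ^ n))"
    by (intro sum_mono) auto
  then show ?thesis
    by (simp add: q_def sum_distrib_left)
qed

(* p stands for the value at t of a fixed polynomial that is L2-close to the full sum. *)
lemma nonneg_poly_tail_sq_le:
  fixes b :: "nat \<Rightarrow> real"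
  assumes b: "\<And>n. 0 \<le> b n" and t: "0 \<le> t" and t12: "0 \<le> t1" "t1 < t2"
  shows "(\<Sum>n\<in>{N<..L}. b n * t ^ n)\<^sup>2
    \<le> ((t1 / t2) ^ Suc N)\<^sup>2 * (\<Sum>n\<le>L. b n * t2 ^ n)\<^sup>2
      + 2 * (p\<^sup>2 * indicator {t1<..} t) + 2 * ((\<Sum>n\<le>L. b n * t ^ n) - p)\<^sup>2"
proof -
  define R where "R x = (\<Sum>n\<in>{N<..L}. b n * x ^ n)" for x :: real
  define P where "P x = (\<Sum>n\<le>L. b n * x ^ n)" for x :: real
  define q where "q = (t1 / t2) ^ Suc N"
  have R_le: "0 \<le> R x \<and> R x \<le> P x" if "0 \<le> x" for x
    unfolding R_def P_def using b that by (auto intro!: sum_nonneg sum_mono2)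
  have "(R t)\<^sup>2 \<le> q\<^sup>2 * (P t2)\<^sup>2 + 2 * (p\<^sup>2 * indicator {t1<..} t) + 2 * (P t - p)\<^sup>2"
  proof (cases "t \<le> t1")
    case True
    have q0: "0 \<le> q"
      using t12 by (simp add: q_def)
    have "R t \<le> q * R t2"
      unfolding R_def q_def by (rule nonneg_poly_tail_le[OF b t True t12(2)])
    also have "\<dots> \<le> q * P t2"
      using R_le[of t2] t12 q0 by (intro mult_left_mono) auto
    finally have "(R t)\<^sup>2 \<le> (q * P t2)\<^sup>2"
      using R_le[OF t] by (intro power_mono) auto
    with True show ?thesis
      by (simp add: power_mult_distrib add_increasing2)
  next
    case False
    have "(R t)\<^sup>2 \<le> (P t)\<^sup>2"
      using R_le[OF t] by (intro power_mono) auto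
    also have "\<dots> \<le> 2 * p\<^sup>2 + 2 * (P t - p)\<^sup>2"
      using zero_le_power2[of "P t - 2 * p"] by (simp add: power2_eq_square algebra_simps)
    finally have "(R t)\<^sup>2 \<le> 2 * p\<^sup>2 + 2 * (P t - p)\<^sup>2" .
    moreover have "p\<^sup>2 * indicator {t1<..} t = p\<^sup>2"
      using False by simp
    moreover have "0 \<le> q\<^sup>2 * (P t2)\<^sup>2"
      by simp
    ultimately show ?thesis
      by linarith
  qed
  then show ?thesis
    unfolding R_def P_def q_def .
qed

lemma sum_atMost_eq_sum_if:
  fixes K L :: nat
  shows "K \<le> L \<Longrightarrow> (\<Sum>n\<le>K. f n) = (\<Sum>n\<le>L. if n \<le> K then f n else 0)"
  by (rule sum.mono_neutral_cong_left) auto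

lemma sum_atMost_split:
  fixes f :: "nat \<Rightarrow> 'a::comm_monoid_add"
  assumes "\<And>n. K < n \<Longrightarrow> f n = 0"
  shows "(\<Sum>n\<le>K. f n) = (\<Sum>n\<le>N. f n) + (\<Sum>n\<in>{N<..K}. f n)"
proof -
  have "(\<Sum>n\<le>K. f n) = (\<Sum>n\<le>max N K. f n)"
    using assms by (intro sum.mono_neutral_left) auto
  also have "\<dots> = (\<Sum>n\<le>N. f n) + (\<Sum>n\<in>{N<..K}. f n)"
    by (subst sum.union_disjoint[symmetric]) (auto intro!: sum.cong)
  finally show ?thesis .
qed

lemma poly_mult_eq_double_sum:
  fixes c d :: "nat \<Rightarrow> real"
  shows "(\<Sum>n\<in>S. c n * t ^ n) * (\<Sum>m\<in>T. d m * t ^ m) = (\<Sum>n\<in>S. \<Sum>m\<in>T. (c n * d m) * t ^ (n + m))"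
  by (simp add: sum_product power_add algebra_simps)

locale moment_measure =
  fixes M :: "real measure"
  assumes sets_M: "sets M = sets borel"
    and nonneg_supp: "emeasure M {..<0} = 0"
    and moments: "\<And>n. integrable M (\<lambda>t. t ^ n)"
    and supp_cond: "emeasure M ({0..} - {x. ereal x < supp_sup M}) = 0"
begin

lemma space_M [simp]: "space M = UNIV"
  using sets_eq_imp_space_eq[OF sets_M] by simp

lemma sets_M_iff [simp]: "A \<in> sets M \<longleftrightarrow> A \<in> sets borel"
  using sets_M by simp

lemma borel_measurable_M: "borel_measurable M = borel_measurable borel"
  by (rule measurable_cong_sets[OF sets_M refl])

sublocale finite_measure M
  using moments[of 0] by (intro finite_measureI) (simp add: integrable_iff_bounded)

lemma AE_support: "AE t in M. 0 \<le> t \<and> ereal t < supp_sup M"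
proof (rule AE_I')
  let ?N = "{..<0::real} \<union> ({0..} - {x. ereal x < supp_sup M})"
  have "{x::real. ereal x < supp_sup M} \<in> sets borel"
    by measurable
  then show "?N \<in> null_sets M"
    using nonneg_supp supp_cond by (intro null_sets.Un) (auto simp: null_sets_def)
  show "{x \<in> space M. \<not> (0 \<le> x \<and> ereal x < supp_sup M)} \<subseteq> ?N"
    by auto
qed

lemma measure_greaterThan_pos:
  assumes "ereal t < supp_sup M"
  shows "0 < measure M {t<..}"
proof -
  obtain y where "y \<in> measure_support M" "t < y"
    using assms unfolding supp_sup_def less_Sup_iff by auto
  then have "0 < emeasure M {t<..}"
    unfolding measure_support_def by auto
  then show ?thesis
    by (simp add: emeasure_eq_measure)
qed

lemma integrable_poly_mult:
  "integrable M (\<lambda>t. (\<Sum>n\<in>S. c n * t ^ n) * (\<Sum>m\<in>T. d m * t ^ m))"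
  unfolding poly_mult_eq_double_sum by (intro Bochner_Integration.integrable_sum) (simp add: moments)

lemma integrable_poly_sq: "integrable M (\<lambda>t. (\<Sum>n\<in>S. c n * t ^ n)\<^sup>2)"
  using integrable_poly_mult[where S=S and c=c and T=S and d=c] by (simp add: power2_eq_square)

lemma integral_poly_sq:
  "integral\<^sup>L M (\<lambda>t. (\<Sum>n\<in>S. c n * t ^ n)\<^sup>2)
    = (\<Sum>n\<in>S. \<Sum>m\<in>S. (c n * c m) * integral\<^sup>L M (\<lambda>t. t ^ (m + n)))"
  unfolding power2_eq_square poly_mult_eq_double_sum by (simp add: integral_sum moments add.commute)

lemma integral_poly_sq_mono:
  assumes "finite B" "A \<subseteq> B" "\<And>n. n \<in> B \<Longrightarrow> 0 \<le> c n"
  shows "integral\<^sup>L M (\<lambda>t. (\<Sum>n\<in>A. c n * t ^ n)\<^sup>2) \<le> integral\<^sup>L M (\<lambda>t. (\<Sum>n\<in>B. c n * t ^ n)\<^sup>2)"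
proof (rule integral_mono_AE[OF integrable_poly_sq integrable_poly_sq])
  show "AE t in M. (\<Sum>n\<in>A. c n * t ^ n)\<^sup>2 \<le> (\<Sum>n\<in>B. c n * t ^ n)\<^sup>2"
    using AE_support
  proof eventually_elim
    case (elim t)
    then show ?case
      using assms by (intro power_mono sum_mono2 sum_nonneg) auto
  qed
qed

lemma poly_sq_measure_greaterThan_le:
  assumes c: "\<And>n. n \<in> S \<Longrightarrow> 0 \<le> c n" and "0 \<le> t0"
  shows "(\<Sum>n\<in>S. c n * t0 ^ n)\<^sup>2 * measure M {t0<..} \<le> integral\<^sup>L M (\<lambda>t. (\<Sum>n\<in>S. c n * t ^ n)\<^sup>2)"
proof -
  have "(\<Sum>n\<in>S. c n * t0 ^ n)\<^sup>2 * measure M {t0<..}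
      = integral\<^sup>L M (\<lambda>t. (\<Sum>n\<in>S. c n * t0 ^ n)\<^sup>2 * indicator {t0<..} t)"
    by (simp add: emeasure_eq_measure)
  also have "\<dots> \<le> integral\<^sup>L M (\<lambda>t. (\<Sum>n\<in>S. c n * t ^ n)\<^sup>2)"
  proof (rule integral_mono_AE)
    show "integrable M (\<lambda>t. (\<Sum>n\<in>S. c n * t0 ^ n)\<^sup>2 * indicator {t0<..} t)"
      by (simp add: emeasure_eq_measure)
    show "AE t in M. (\<Sum>n\<in>S. c n * t0 ^ n)\<^sup>2 * indicator {t0<..} t \<le> (\<Sum>n\<in>S. c n * t ^ n)\<^sup>2"
    proof (rule AE_I2)
      fix t show "(\<Sum>n\<in>S. c n * t0 ^ n)\<^sup>2 * indicator {t0<..} t \<le> (\<Sum>n\<in>S. c n * t ^ n)\<^sup>2"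
        using c \<open>0 \<le> t0\<close>
        by (cases "t0 < t") (auto intro!: power_mono sum_mono sum_nonneg mult_left_mono)
    qed
  qed (rule integrable_poly_sq)
  finally show ?thesis .
qed

lemma moment_sq_pos:
  assumes "0 < supp_sup M"
  shows "0 < integral\<^sup>L M (\<lambda>t. (t ^ n)\<^sup>2)"
proof -
  obtain t0 where t0: "0 < t0" "ereal t0 < supp_sup M"
    using ereal_dense2[OF assms] by (auto simp: zero_ereal_def)
  have "(t0 ^ n)\<^sup>2 * measure M {t0<..} \<le> integral\<^sup>L M (\<lambda>t. (t ^ n)\<^sup>2)"
    using poly_sq_measure_greaterThan_le[of "{n}" "\<lambda>_. 1" t0] t0 by simp
  moreover have "0 < (t0 ^ n)\<^sup>2 * measure M {t0<..}"
    using t0 measure_greaterThan_pos by simp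
  ultimately show ?thesis
    by linarith
qed

lemma moment_sq_eq_0:
  assumes "supp_sup M \<le> 0"
  shows "integral\<^sup>L M (\<lambda>t. (t ^ n)\<^sup>2) = 0"
proof -
  have "AE t in M. (t ^ n)\<^sup>2 = (0::real)"
    using AE_support
  proof eventually_elim
    case (elim t)
    with assms have False
      by (metis order_less_le_trans zero_ereal_def ereal_less_eq(3) not_le)
    then show ?case ..
  qed
  then show ?thesis
    by (subst integral_cong_AE[where g="\<lambda>_. 0"]) (auto simp: borel_measurable_M)
qed

lemma exists_small_tail_integral:
  fixes g :: "real \<Rightarrow> real"
  assumes g: "integrable M g" and spos: "0 < supp_sup M" and e: "0 < e"
  obtains t1 where "0 \<le> t1" "ereal t1 < supp_sup M"
    "integral\<^sup>L M (\<lambda>t. g t * indicator {t1<..} t) \<le> e"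
proof -
  obtain \<tau> where \<tau>: "\<And>j. 0 \<le> \<tau> j" "\<And>j. ereal (\<tau> j) < supp_sup M"
    and \<tau>_ev: "\<And>t. ereal t < supp_sup M \<Longrightarrow> eventually (\<lambda>j. t \<le> \<tau> j) sequentially"
    using ereal_approx_from_below[OF spos] by blast
  have gm: "g \<in> borel_measurable M"
    using g by auto
  have "(\<lambda>j. integral\<^sup>L M (\<lambda>t. g t * indicator {\<tau> j<..} t)) \<longlonglongrightarrow> integral\<^sup>L M (\<lambda>t. 0::real)"
  proof (rule integral_dominated_convergence[where w="\<lambda>t. norm (g t)"])
    show "(\<lambda>t. g t * indicator {\<tau> j<..} t) \<in> borel_measurable M" for j
      using gm by (intro borel_measurable_times) (simp_all add: borel_measurable_M)
    show "AE t in M. (\<lambda>j. g t * indicator {\<tau> j<..} t) \<longlonglongrightarrow> 0"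
      using AE_support
    proof eventually_elim
      case (elim t)
      have "eventually (\<lambda>j. t \<le> \<tau> j) sequentially"
        using \<tau>_ev elim by simp
      then have "eventually (\<lambda>j. g t * indicator {\<tau> j<..} t = 0) sequentially"
        by eventually_elim simp
      then show ?case
        by (rule tendsto_eventually)
    qed
    show "AE t in M. norm (g t * indicator {\<tau> j<..} t) \<le> norm (g t)" for j
      by (auto simp: indicator_def)
  qed (use g in auto)
  then obtain j where "integral\<^sup>L M (\<lambda>t. g t * indicator {\<tau> j<..} t) < e"
    using order_tendstoD(2)[OF _ e] eventually_sequentially by fastforce
  then show thesis
    using that \<tau> by (meson less_imp_le)
qed

lemma integral_nonneg_poly_tail_sq_le:
  fixes b c :: "nat \<Rightarrow> real" and L L' :: nat
  assumes b: "\<And>n. 0 \<le> b n" and t12: "0 \<le> t1" "t1 < t2"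
  defines "P t \<equiv> \<Sum>n\<le>L. b n * t ^ n" and "Q t \<equiv> \<Sum>n\<le>L'. c n * t ^ n"
  shows "integral\<^sup>L M (\<lambda>t. (\<Sum>n\<in>{N<..L}. b n * t ^ n)\<^sup>2)
    \<le> ((t1 / t2) ^ Suc N)\<^sup>2 * (P t2)\<^sup>2 * measure M (space M)
      + 2 * integral\<^sup>L M (\<lambda>t. (Q t)\<^sup>2 * indicator {t1<..} t) + 2 * integral\<^sup>L M (\<lambda>t. (P t - Q t)\<^sup>2)"
proof -
  define c0 where "c0 = ((t1 / t2) ^ Suc N)\<^sup>2 * (P t2)\<^sup>2"
  have int_Q: "integrable M (\<lambda>t. 2 * ((Q t)\<^sup>2 * indicator {t1<..} t))"
    unfolding Q_def by (intro integrable_mult_right integrable_real_mult_indicator integrable_poly_sq) simp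
  have "(P t - Q t)\<^sup>2 = P t * P t + Q t * Q t - 2 * (P t * Q t)" for t
    by (simp add: power2_eq_square algebra_simps)
  then have int_PQ: "integrable M (\<lambda>t. 2 * (P t - Q t)\<^sup>2)"
    unfolding P_def Q_def by (simp add: integrable_poly_mult)
  have "integral\<^sup>L M (\<lambda>t. (\<Sum>n\<in>{N<..L}. b n * t ^ n)\<^sup>2)
      \<le> integral\<^sup>L M (\<lambda>t. c0 + 2 * ((Q t)\<^sup>2 * indicator {t1<..} t) + 2 * (P t - Q t)\<^sup>2)"
  proof (rule integral_mono_AE[OF integrable_poly_sq])
    show "AE t in M. (\<Sum>n\<in>{N<..L}. b n * t ^ n)\<^sup>2
        \<le> c0 + 2 * ((Q t)\<^sup>2 * indicator {t1<..} t) + 2 * (P t - Q t)\<^sup>2"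
      using AE_support
    proof eventually_elim
      case (elim t)
      then show ?case
        using nonneg_poly_tail_sq_le[OF b _ t12, where t=t and N=N and L=L and p="Q t"] by (simp add: c0_def P_def)
    qed
  qed (use int_Q int_PQ in simp)
  also have "\<dots> = c0 * measure M (space M)
      + 2 * integral\<^sup>L M (\<lambda>t. (Q t)\<^sup>2 * indicator {t1<..} t) + 2 * integral\<^sup>L M (\<lambda>t. (P t - Q t)\<^sup>2)"
    using int_Q int_PQ by simp
  finally show ?thesis
    unfolding c0_def .
qed

end

locale gram_system = moment_measure M for M :: "real measure" +
  fixes w :: "nat \<Rightarrow> 'k::real_inner" and u :: "nat \<Rightarrow> 'h::real_inner" and C :: real
  assumes bound: "\<And>N (a :: nat \<Rightarrow> real). (\<forall>n. a n \<ge> 0) \<Longrightarrow>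
        norm (\<Sum>n\<le>N. a n *\<^sub>R w n)
          \<le> C * sqrt (integral\<^sup>L M (\<lambda>t. (\<Sum>n\<le>N. a n * t ^ n)\<^sup>2))"
    and gram: "\<And>n m. u n \<bullet> u m = integral\<^sup>L M (\<lambda>t. t ^ (m + n)) + w n \<bullet> w m"
begin

lemma norm_sum_sq_eq:
  "(norm (\<Sum>n\<in>S. c n *\<^sub>R u n))\<^sup>2
    = integral\<^sup>L M (\<lambda>t. (\<Sum>n\<in>S. c n * t ^ n)\<^sup>2) + (norm (\<Sum>n\<in>S. c n *\<^sub>R w n))\<^sup>2"
  unfolding power2_norm_eq_inner integral_poly_sq
  by (simp add: inner_sum_left inner_sum_right gram algebra_simps sum.distrib sum_distrib_left)

lemma integral_poly_sq_le_norm_sum: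
  "integral\<^sup>L M (\<lambda>t. (\<Sum>n\<in>S. c n * t ^ n)\<^sup>2) \<le> (norm (\<Sum>n\<in>S. c n *\<^sub>R u n))\<^sup>2"
  using norm_sum_sq_eq[of c S] by simp

lemma norm_sum_w_le:
  assumes "finite S" "\<And>n. n \<in> S \<Longrightarrow> 0 \<le> c n"
  shows "norm (\<Sum>n\<in>S. c n *\<^sub>R w n) \<le> C * sqrt (integral\<^sup>L M (\<lambda>t. (\<Sum>n\<in>S. c n * t ^ n)\<^sup>2))"
proof -
  define N where "N = Max (insert 0 S)"
  define a where "a n = (if n \<in> S then c n else 0)" for n
  have S: "S \<subseteq> {..N}"
    using assms(1) by (auto simp: N_def)
  have "(\<Sum>n\<le>N. a n *\<^sub>R w n) = (\<Sum>n\<in>S. c n *\<^sub>R w n)"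
    "(\<Sum>n\<le>N. a n * t ^ n) = (\<Sum>n\<in>S. c n * t ^ n)" for t :: real
    unfolding a_def using S by (auto intro!: sum.mono_neutral_cong_right)
  moreover have "\<forall>n. 0 \<le> a n"
    using assms(2) by (simp add: a_def)
  ultimately show ?thesis
    using bound[of a N] by simp
qed

lemma norm_sum_sq_le:
  assumes "finite S" "\<And>n. n \<in> S \<Longrightarrow> 0 \<le> c n"
  shows "(norm (\<Sum>n\<in>S. c n *\<^sub>R u n))\<^sup>2 \<le> (1 + C\<^sup>2) * integral\<^sup>L M (\<lambda>t. (\<Sum>n\<in>S. c n * t ^ n)\<^sup>2)"
proof -
  let ?I = "integral\<^sup>L M (\<lambda>t. (\<Sum>n\<in>S. c n * t ^ n)\<^sup>2)"
  have "(norm (\<Sum>n\<in>S. c n *\<^sub>R w n))\<^sup>2 \<le> (C * sqrt ?I)\<^sup>2"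
    using norm_sum_w_le[OF assms] by (intro power_mono) auto
  also have "\<dots> = C\<^sup>2 * ?I"
    by (simp add: power_mult_distrib)
  finally show ?thesis
    using norm_sum_sq_eq[of c S] by (simp add: algebra_simps)
qed

lemma coeff_mult_sqrt_moment_le:
  assumes "finite S" "n \<in> S" "\<And>m. m \<in> S \<Longrightarrow> 0 \<le> c m"
  shows "c n * sqrt (integral\<^sup>L M (\<lambda>t. (t ^ n)\<^sup>2)) \<le> norm (\<Sum>m\<in>S. c m *\<^sub>R u m)"
proof (rule power2_le_imp_le)
  have "(c n * sqrt (integral\<^sup>L M (\<lambda>t. (t ^ n)\<^sup>2)))\<^sup>2 = integral\<^sup>L M (\<lambda>t. (\<Sum>m\<in>{n}. c m * t ^ m)\<^sup>2)"
    by (simp add: power_mult_distrib)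
  also have "\<dots> \<le> integral\<^sup>L M (\<lambda>t. (\<Sum>m\<in>S. c m * t ^ m)\<^sup>2)"
    using assms by (intro integral_poly_sq_mono) auto
  also have "\<dots> \<le> (norm (\<Sum>m\<in>S. c m *\<^sub>R u m))\<^sup>2"
    by (rule integral_poly_sq_le_norm_sum)
  finally show "(c n * sqrt (integral\<^sup>L M (\<lambda>t. (t ^ n)\<^sup>2)))\<^sup>2 \<le> (norm (\<Sum>m\<in>S. c m *\<^sub>R u m))\<^sup>2" .
qed simp

lemma coeff_le_norm_sum_div:
  assumes spos: "0 < supp_sup M" and "\<And>m. 0 \<le> c m" "\<And>m. N < m \<Longrightarrow> c m = 0"
  shows "c n \<le> norm (\<Sum>m\<le>N. c m *\<^sub>R u m) / sqrt (integral\<^sup>L M (\<lambda>t. (t ^ n)\<^sup>2))"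
proof (cases "n \<le> N")
  case True
  then have "c n * sqrt (integral\<^sup>L M (\<lambda>t. (t ^ n)\<^sup>2)) \<le> norm (\<Sum>m\<le>N. c m *\<^sub>R u m)"
    using assms(2) by (intro coeff_mult_sqrt_moment_le) auto
  then show ?thesis
    using moment_sq_pos[OF spos] by (simp add: pos_le_divide_eq)
next
  case False
  then show ?thesis
    using assms(3)[of n] by simp
qed

lemma u_eq_0_if_supp_sup_nonpos:
  assumes "supp_sup M \<le> 0"
  shows "u n = 0"
  using norm_sum_sq_le[of "{n}" "\<lambda>_. 1"] moment_sq_eq_0[OF assms, of n] by simp

lemma integral_poly_diff_sq_le:
  "integral\<^sup>L M (\<lambda>t. ((\<Sum>n\<le>N. a n * t ^ n) - (\<Sum>n\<le>N'. c n * t ^ n))\<^sup>2)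
    \<le> (norm ((\<Sum>n\<le>N. a n *\<^sub>R u n) - (\<Sum>n\<le>N'. c n *\<^sub>R u n)))\<^sup>2"
proof -
  define L where "L = max N N'"
  define d where "d n = (if n \<le> N then a n else 0) - (if n \<le> N' then c n else 0)" for n
  have NL: "N \<le> L" "N' \<le> L"
    by (simp_all add: L_def)
  have "(\<Sum>n\<le>L. d n * t ^ n) = (\<Sum>n\<le>N. a n * t ^ n) - (\<Sum>n\<le>N'. c n * t ^ n)" for t :: real
    unfolding sum_atMost_eq_sum_if[OF NL(1)] sum_atMost_eq_sum_if[OF NL(2)] sum_subtractf[symmetric]
    by (intro sum.cong) (auto simp: d_def algebra_simps)
  moreover have "(\<Sum>n\<le>L. d n *\<^sub>R u n) = (\<Sum>n\<le>N. a n *\<^sub>R u n) - (\<Sum>n\<le>N'. c n *\<^sub>R u n)"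
    unfolding sum_atMost_eq_sum_if[OF NL(1)] sum_atMost_eq_sum_if[OF NL(2)] sum_subtractf[symmetric]
    by (intro sum.cong) (auto simp: d_def algebra_simps)
  ultimately show ?thesis
    using integral_poly_sq_le_norm_sum[of d "{..L}"] by simp
qed

lemma Cauchy_imp_poly_L2_close:
  fixes b :: "nat \<Rightarrow> nat \<Rightarrow> real"
  assumes "Cauchy (\<lambda>k. \<Sum>n\<le>NN k. b k n *\<^sub>R u n)" "0 < \<delta>"
  obtains K0 where "\<And>k. K0 \<le> k \<Longrightarrow>
    integral\<^sup>L M (\<lambda>t. ((\<Sum>n\<le>NN k. b k n * t ^ n) - (\<Sum>n\<le>NN K0. b K0 n * t ^ n))\<^sup>2) \<le> \<delta>"
proof -
  obtain K0 where K0: "\<And>k. K0 \<le> k \<Longrightarrow>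
      dist (\<Sum>n\<le>NN k. b k n *\<^sub>R u n) (\<Sum>n\<le>NN K0. b K0 n *\<^sub>R u n) < sqrt \<delta>"
    using metric_CauchyD[OF assms(1), of "sqrt \<delta>"] assms(2) by auto
  show thesis
  proof (rule that)
    fix k assume "K0 \<le> k"
    have "integral\<^sup>L M (\<lambda>t. ((\<Sum>n\<le>NN k. b k n * t ^ n) - (\<Sum>n\<le>NN K0. b K0 n * t ^ n))\<^sup>2)
        \<le> (norm ((\<Sum>n\<le>NN k. b k n *\<^sub>R u n) - (\<Sum>n\<le>NN K0. b K0 n *\<^sub>R u n)))\<^sup>2"
      by (rule integral_poly_diff_sq_le)
    also have "\<dots> \<le> (sqrt \<delta>)\<^sup>2"
      using K0[OF \<open>K0 \<le> k\<close>] by (intro power_mono) (auto simp: dist_norm)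
    finally show "integral\<^sup>L M (\<lambda>t. ((\<Sum>n\<le>NN k. b k n * t ^ n) - (\<Sum>n\<le>NN K0. b K0 n * t ^ n))\<^sup>2) \<le> \<delta>"
      using assms(2) by simp
  qed
qed

lemma poly_sq_measure_greaterThan_le_norm_sum:
  assumes "\<And>n. n \<in> S \<Longrightarrow> 0 \<le> c n" "0 \<le> t0"
  shows "(\<Sum>n\<in>S. c n * t0 ^ n)\<^sup>2 * measure M {t0<..} \<le> (norm (\<Sum>n\<in>S. c n *\<^sub>R u n))\<^sup>2"
  using poly_sq_measure_greaterThan_le[OF assms] integral_poly_sq_le_norm_sum by (rule order_trans)

lemma tail_integral_uniformly_small:
  fixes b :: "nat \<Rightarrow> nat \<Rightarrow> real" and NN :: "nat \<Rightarrow> nat"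
  assumes spos: "0 < supp_sup M"
    and b_nn: "\<And>k n. 0 \<le> b k n" and b_out: "\<And>k n. NN k < n \<Longrightarrow> b k n = 0"
    and Cauchy: "Cauchy (\<lambda>k. \<Sum>n\<le>NN k. b k n *\<^sub>R u n)"
    and e: "0 < e"
  obtains N0 K0 where "\<And>N k. N0 \<le> N \<Longrightarrow> K0 \<le> k \<Longrightarrow>
    integral\<^sup>L M (\<lambda>t. (\<Sum>n\<in>{N<..NN k}. b k n * t ^ n)\<^sup>2) \<le> e"
proof -
  define X where "X k = (\<Sum>n\<le>NN k. b k n *\<^sub>R u n)" for k
  define P where "P k t = (\<Sum>n\<le>NN k. b k n * t ^ n)" for k t
  define \<delta> where "\<delta> = e / 5"
  have \<delta>: "0 < \<delta>"
    using e by (simp add: \<delta>_def)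
  obtain B where B: "\<And>k. norm (X k) \<le> B"
    using Cauchy_Bseq[OF Cauchy] unfolding Bseq_def X_def by blast
  obtain K0 where K0: "\<And>k. K0 \<le> k \<Longrightarrow> integral\<^sup>L M (\<lambda>t. (P k t - P K0 t)\<^sup>2) \<le> \<delta>"
    using Cauchy_imp_poly_L2_close[OF Cauchy \<delta>] unfolding P_def by blast
  obtain t1 where t1: "0 \<le> t1" "ereal t1 < supp_sup M"
    and t1_tail: "integral\<^sup>L M (\<lambda>t. (P K0 t)\<^sup>2 * indicator {t1<..} t) \<le> \<delta>"
    using exists_small_tail_integral[OF integrable_poly_sq spos \<delta>] unfolding P_def by blast
  obtain t2 where t2: "t1 < t2" "ereal t2 < supp_sup M"
    using ereal_dense2[OF t1(2)] by auto
  define m where "m = measure M {t2<..}"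
  have m: "0 < m"
    unfolding m_def using t2(2) by (rule measure_greaterThan_pos)
  have P_t2: "(P k t2)\<^sup>2 \<le> B\<^sup>2 / m" for k
  proof -
    have "(P k t2)\<^sup>2 * m \<le> (norm (X k))\<^sup>2"
      unfolding P_def X_def m_def using t1 t2 b_nn by (intro poly_sq_measure_greaterThan_le_norm_sum) auto
    also have "\<dots> \<le> B\<^sup>2"
      using B[of k] by (intro power_mono) auto
    finally show ?thesis
      using m by (simp add: field_simps)
  qed
  have "(\<lambda>N. (t1 / t2) ^ Suc N) \<longlonglongrightarrow> 0"
    using t1 t2 by (intro LIMSEQ_Suc LIMSEQ_power_zero) simp
  then have geom: "(\<lambda>N. ((t1 / t2) ^ Suc N)\<^sup>2) \<longlonglongrightarrow> 0"
    using tendsto_power[of _ 0 sequentially 2] by simp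
  have "(\<lambda>N. ((t1 / t2) ^ Suc N)\<^sup>2 * (B\<^sup>2 / m) * measure M (space M)) \<longlonglongrightarrow> 0"
    by (intro tendsto_mult_left_zero geom)
  from order_tendstoD(2)[OF this \<delta>] obtain N0
    where N0: "\<And>N. N0 \<le> N \<Longrightarrow> ((t1 / t2) ^ Suc N)\<^sup>2 * (B\<^sup>2 / m) * measure M (space M) < \<delta>"
    unfolding eventually_sequentially by blast
  show thesis
  proof (rule that)
    fix N k assume "N0 \<le> N" "K0 \<le> k"
    have "((t1 / t2) ^ Suc N)\<^sup>2 * (P k t2)\<^sup>2 * measure M (space M)
        \<le> ((t1 / t2) ^ Suc N)\<^sup>2 * (B\<^sup>2 / m) * measure M (space M)"
      using P_t2 by (intro mult_right_mono mult_left_mono) auto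
    then show "integral\<^sup>L M (\<lambda>t. (\<Sum>n\<in>{N<..NN k}. b k n * t ^ n)\<^sup>2) \<le> e"
      using integral_nonneg_poly_tail_sq_le[where b="b k" and L="NN k" and L'="NN K0"
          and c="b K0" and N=N, OF b_nn t1(1) t2(1)]
        N0[OF \<open>N0 \<le> N\<close>] K0[OF \<open>K0 \<le> k\<close>] t1_tail
      unfolding P_def \<delta>_def by linarith
  qed
qed

lemma partial_sums_tendsto:
  fixes b :: "nat \<Rightarrow> nat \<Rightarrow> real" and NN :: "nat \<Rightarrow> nat"
  assumes spos: "0 < supp_sup M"
    and b_nn: "\<And>k n. 0 \<le> b k n" and b_out: "\<And>k n. NN k < n \<Longrightarrow> b k n = 0"
    and X_lim: "(\<lambda>k. \<Sum>n\<le>NN k. b k n *\<^sub>R u n) \<longlonglongrightarrow> x"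
    and b_lim: "\<And>n. (\<lambda>k. b k n) \<longlonglongrightarrow> a n"
  shows "(\<lambda>N. \<Sum>n\<le>N. a n *\<^sub>R u n) \<longlonglongrightarrow> x"
proof (rule LIMSEQ_I)
  fix \<epsilon> :: real assume "0 < \<epsilon>"
  define X where "X k = (\<Sum>n\<le>NN k. b k n *\<^sub>R u n)" for k
  have "0 < (\<epsilon> / 3)\<^sup>2 / (1 + C\<^sup>2)"
    using \<open>0 < \<epsilon>\<close> by (simp add: add_pos_nonneg)
  then obtain N0 K0 where tail: "\<And>N k. N0 \<le> N \<Longrightarrow> K0 \<le> k \<Longrightarrow>
      integral\<^sup>L M (\<lambda>t. (\<Sum>n\<in>{N<..NN k}. b k n * t ^ n)\<^sup>2) \<le> (\<epsilon> / 3)\<^sup>2 / (1 + C\<^sup>2)"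
    using tail_integral_uniformly_small[OF spos b_nn b_out LIMSEQ_imp_Cauchy[OF X_lim]] by blast
  have "norm ((\<Sum>n\<le>N. a n *\<^sub>R u n) - x) < \<epsilon>" if "N0 \<le> N" for N
  proof -
    define head where "head k = (\<Sum>n\<le>N. (b k n - a n) *\<^sub>R u n)" for k
    have "head \<longlonglongrightarrow> (\<Sum>n\<le>N. (a n - a n) *\<^sub>R u n)"
      unfolding head_def by (intro tendsto_intros b_lim)
    then have "(\<lambda>k. norm (head k)) \<longlonglongrightarrow> 0"
      by (simp add: tendsto_norm_zero)
    moreover have "(\<lambda>k. norm (X k - x)) \<longlonglongrightarrow> 0"
      using X_lim unfolding X_def by (intro tendsto_norm_zero LIM_zero)
    ultimately have "eventually (\<lambda>k. norm (head k) < \<epsilon> / 3 \<and> norm (X k - x) < \<epsilon> / 3 \<and> K0 \<le> k) sequentially"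
      using \<open>0 < \<epsilon>\<close> by (intro eventually_conj order_tendstoD(2) eventually_ge_at_top) auto
    then obtain k where k: "norm (head k) < \<epsilon> / 3" "norm (X k - x) < \<epsilon> / 3" "K0 \<le> k"
      unfolding eventually_sequentially by blast
    define T where "T = (\<Sum>n\<in>{N<..NN k}. b k n *\<^sub>R u n)"
    have "X k = (\<Sum>n\<le>N. b k n *\<^sub>R u n) + T"
      unfolding X_def T_def using b_out by (intro sum_atMost_split) simp
    then have decomp: "(\<Sum>n\<le>N. a n *\<^sub>R u n) - x = (X k - x) - head k - T"
      by (simp add: head_def scaleR_left_diff_distrib sum_subtractf)
    have "norm T \<le> \<epsilon> / 3"
    proof (rule power2_le_imp_le)
      have "(norm T)\<^sup>2 \<le> (1 + C\<^sup>2) * integral\<^sup>L M (\<lambda>t. (\<Sum>n\<in>{N<..NN k}. b k n * t ^ n)\<^sup>2)"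
        unfolding T_def using b_nn by (intro norm_sum_sq_le) auto
      also have "\<dots> \<le> (\<epsilon> / 3)\<^sup>2"
        using tail[OF that k(3)] by (simp add: field_simps add_pos_nonneg)
      finally show "(norm T)\<^sup>2 \<le> (\<epsilon> / 3)\<^sup>2" .
    qed (use \<open>0 < \<epsilon>\<close> in simp)
    then show ?thesis
      unfolding decomp using k norm_triangle_ineq4[of "X k - x - head k" T] norm_triangle_ineq4[of "X k - x" "head k"]
      by linarith
  qed
  then show "\<exists>N0. \<forall>N\<ge>N0. norm ((\<Sum>n\<le>N. a n *\<^sub>R u n) - x) < \<epsilon>"
    by blast
qed

lemma closure_cone_gen_subset_series_cone: "closure (cone_gen u) \<subseteq> series_cone u"
proof
  fix x assume "x \<in> closure (cone_gen u)"
  then obtain X where X_in: "\<And>k. X k \<in> cone_gen u" and X_lim: "X \<longlonglongrightarrow> x"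
    unfolding closure_sequential by blast
  obtain b NN where b_nn: "\<And>k n. 0 \<le> b k n" and b_out: "\<And>k n. NN k < n \<Longrightarrow> b k n = 0"
    and X_eq: "\<And>k. X k = (\<Sum>n\<le>NN k. b k n *\<^sub>R u n)"
    using cone_gen_seq_obtain[where X=X, OF X_in] by blast
  show "x \<in> series_cone u"
  proof (cases "supp_sup M \<le> 0")
    case True
    then have "X = (\<lambda>k. 0)"
      by (intro ext) (simp add: X_eq u_eq_0_if_supp_sup_nonpos)
    then have "x = 0"
      using X_lim by (simp add: LIMSEQ_const_iff)
    with True show ?thesis
      unfolding series_cone_def by (auto simp: u_eq_0_if_supp_sup_nonpos intro!: exI[of _ "\<lambda>_. 0"])
  next
    case False
    then have spos: "0 < supp_sup M"
      by simp
    obtain B where B: "\<And>k. norm (X k) \<le> B"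
      using convergent_imp_Bseq[OF convergentI[OF X_lim]] unfolding Bseq_def by blast
    define mom where "mom n = sqrt (integral\<^sup>L M (\<lambda>t. (t ^ n)\<^sup>2))" for n
    have b_le: "b k n \<le> B / mom n" for k n
    proof -
      have "b k n \<le> norm (X k) / mom n"
        unfolding mom_def X_eq by (rule coeff_le_norm_sum_div[where c="b k", OF spos b_nn b_out])
      also have "\<dots> \<le> B / mom n"
        using B[of k] by (intro divide_right_mono) (simp_all add: mom_def)
      finally show ?thesis .
    qed
    obtain r a where r: "strict_mono r" and a: "\<And>n. (\<lambda>k. b (r k) n) \<longlonglongrightarrow> a n"
      using bounded_seq_coordinatewise_convergent_subseq[of b "\<lambda>n. B / mom n"] b_nn b_le by blast
    have "(\<lambda>N. \<Sum>n\<le>N. a n *\<^sub>R u n) \<longlonglongrightarrow> x"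
      using partial_sums_tendsto[OF spos, where b="\<lambda>k. b (r k)" and NN="\<lambda>k. NN (r k)"]
        LIMSEQ_subseq_LIMSEQ[OF X_lim r] b_nn b_out a by (simp add: X_eq o_def)
    moreover have "0 \<le> a n" for n
      by (rule LIMSEQ_le_const[OF a]) (simp add: b_nn)
    ultimately show ?thesis
      unfolding series_cone_def by blast
  qed
qed

end

theorem theorem1p1:
  fixes M :: "real measure"
    and w :: "nat \<Rightarrow> 'k::{real_inner, complete_space}"
    and v :: "nat \<Rightarrow> 'h::{real_inner, complete_space}"
    and lam :: "nat \<Rightarrow> real"
    and C :: real
  assumes sets_M: "sets M = sets borel"
    and nonneg_supp: "emeasure M {..<0} = 0"
    and moments: "\<And>n. integrable M (\<lambda>t. t ^ n)"
    and supp_cond: "emeasure M ({0..} - {x. ereal x < supp_sup M}) = 0"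
    and C_pos: "C > 0"
    and bound: "\<And>N (a :: nat \<Rightarrow> real). (\<forall>n. a n \<ge> 0) \<Longrightarrow>
        norm (\<Sum>n\<le>N. a n *\<^sub>R w n)
          \<le> C * sqrt (integral\<^sup>L M (\<lambda>t. (\<Sum>n\<le>N. a n * t ^ n)\<^sup>2))"
    and lam_pos: "\<And>n. lam n > 0"
    and gram: "\<And>n m. (lam n *\<^sub>R v n) \<bullet> (lam m *\<^sub>R v m)
                 = integral\<^sup>L M (\<lambda>t. t ^ (m + n)) + w n \<bullet> w m"
  shows "closure (cone_gen v) = series_cone v
         \<and> closed (series_cone v) \<and> convex (series_cone v) \<and> cone (series_cone v)"
proof -
  interpret gram_system M w "\<lambda>n. lam n *\<^sub>R v n" C
    by unfold_locales (use sets_M nonneg_supp moments supp_cond bound gram in auto)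
  have "closure (cone_gen v) = series_cone v"
    using closure_cone_gen_subset_series_cone series_cone_subset_closure_cone_gen
    unfolding cone_gen_scaleR_pos[OF lam_pos] series_cone_scaleR_pos[OF lam_pos] by blast
  then show ?thesis
    using closed_closure series_cone_convex series_cone_cone by metis
qed

end
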